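(* Let $\mathscr{G}_n$ be a simple, verbose $\upsilon$-reduction grammar, let $\varphi = \lambda(T[\Uparrow(S)])$, and let $t = (\lambda a)[s][s_1]\cdots[s_w]$ be a $\lambda\upsilon$-term ($w\ge 0$). Then $t$ normalises in exactly $n+1$ normal-order $\upsilon$-steps if and only if there exists a unique term $\pi = (\lambda(\alpha[\Uparrow(\sigma)]))[\sigma_1]\cdots[\sigma_w] \in \Delta_\varphi^n$ such that $t \in L\big((\lambda\alpha)[\sigma][\sigma_1]\cdots[\sigma_w]\big)$.
   Context: $\lambda\upsilon$-terms: $t ::= \underline{n} \mid \lambda t \mid t\,t \mid t[s]$; substitutions $s ::= t/ \mid \Uparrow(s) \mid\ \uparrow$; indices $\underline{n} ::= \underline{0} \mid \mathtt{S}\,\underline{n}$. The $\upsilon$-rules: $(a b)[s] \to a[s](b[s])$; $(\lambda a)[s] \to \lambda(a[\Uparrow(s)])$; $\underline{0}[a/] \to a$; $(\mathtt{S}\,\underline{n})[a/] \to \underline{n}$; $\underline{0}[\Uparrow(s)] \to \underline{0}$; $(\mathtt{S}\,\underline{n})[\Uparrow(s)] \to \underline{n}[s][\uparrow]$; $\underline{n}[\uparrow] \to \mathtt{S}\,\underline{n}$. A term normalises in $k$ steps if leftmost-outermost $\upsilon$-reduction reaches a $\upsilon$-normal form in exactly $k$ steps. $\mathscr{F}$ is the ranked alphabet of $\lambda\upsilon$ symbols (application, closure $\cdot[\cdot]$ binary; $\lambda$, $\cdot/$, $\Uparrow$, $\mathtt{S}$ unary; $\uparrow,\underline{0}$ constants);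 $\mathscr{T}_{\mathscr{F}}(X)$ is the set of terms over $\mathscr{F}$ with variables from $X$. In a regular tree grammar with productions $X\to\alpha$, $L(\alpha)$ is the set of ground terms derivable from $\alpha$; a non-terminal is unambiguous if each ground term has at most one derivation from it; a production $X\to\alpha$ is self-referencing if $X$ occurs in $\alpha$, regular otherwise. $\Lambda$ has productions $T \to N \mid \lambda T \mid T T \mid T[S]$, $S \to T/ \mid \Uparrow(S) \mid \uparrow$, $N \to \underline{0} \mid \mathtt{S} N$. A $\upsilon$-reduction grammar $\mathscr{G}_n$ has axiom $G_n$, non-terminals $\mathscr{N}_n=\{T,S,N,G_0,\dots,G_n\}$, contains all productions of $\Lambda$, and each $G_k$ ($0\le k\le n$) is unambiguous with $L(G_k)$ the set of terms normalising in exactly $k$ steps. It is simple if its self-referencing productions are productions of $\Lambda$ or of the form $G_k \to \lambda G_k \mid G_0 G_k \mid G_k G_0$, and each regular production $G_k\to\alpha$ has $\alpha \in \mathscr{T}_{\mathscr{F}}(\{T,S,N,G_0,\dots,G_{k-1}\})$. It is verbose if none of its productions has the form $X \to G_k[\sigma_1]\cdots[\sigma_w]$. A term has closure width $w$ if $w$ is the largest integer with the term of the form $\chi[\sigma_1]\cdots[\sigma_w]$. A finite intersection partition $\Pi(\alpha,\beta)$ of $\alpha,\beta\in\mathscr{T}_{\mathscr{F}}(\mathscr{N}_n)$ is a finite set of terms in $\mathscr{T}_{\mathscr{F}}(\mathscr{N}_n)$ with pairwise disjoint languages whose union of languages is $L(\alpha)\cap L(\beta)$. For a template $\varphi = \chi[\tau_1]\cdots[\tau_d]$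 of closure width $d$ and a production $X \to \gamma$ of $\mathscr{G}_n$ where $\gamma = \gamma'[\sigma_1]\cdots[\sigma_w]$ has closure width $w$, set $\Delta_\varphi(\gamma) = \Pi\big(\gamma,\ \chi[\tau_1]\cdots[\tau_d][S]\cdots[S]\big)$ with $w-d$ copies of $[S]$ appended, and $\Delta_\varphi^n = \bigcup\{\Delta_\varphi(\gamma) : G_n \to \gamma \text{ a production of } \mathscr{G}_n\}$. (Here $\varphi = \lambda(T[\Uparrow(S)])$ has closure width $d=0$.) *)

theory Defs
  imports Main
begin

text \<open>Terms of T_F(X): symbols application, closure (binary), lambda, slash (a/),
  lift, successor (unary), shift and zero (constants), plus variables from X.
  Ground lambda-upsilon terms are the elements of language L(T) of the grammar Lambda.\<close>

datatype 'v lt =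
    Var 'v
  | Zero
  | Sc "'v lt"
  | Lam "'v lt"
  | App "'v lt" "'v lt"
  | Clo "'v lt" "'v lt"
  | Sl "'v lt"
  | Lift "'v lt"
  | Shift

fun nts :: "'v lt \<Rightarrow> 'v set" where
  "nts (Var x) = {x}"
| "nts Zero = {}"
| "nts (Sc a) = nts a"
| "nts (Lam a) = nts a"
| "nts (App a b) = nts a \<union> nts b"
| "nts (Clo a b) = nts a \<union> nts b"
| "nts (Sl a) = nts a"
| "nts (Lift a) = nts a"
| "nts Shift = {}"

definition clos :: "'v lt \<Rightarrow> 'v lt list \<Rightarrow> 'v lt" where
  "clos x ss = foldl Clo x ss"

fun cwidth :: "'v lt \<Rightarrow> nat" where
  "cwidth (Clo x s) = Suc (cwidth x)"
| "cwidth _ = 0"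

datatype nt = NT | NS | NN | NG nat

type_synonym grammar = "(nt \<times> nt lt) set"

definition Lambda :: grammar where
  "Lambda = {(NT, Var NN), (NT, Lam (Var NT)), (NT, App (Var NT) (Var NT)),
             (NT, Clo (Var NT) (Var NS)),
             (NS, Sl (Var NT)), (NS, Lift (Var NS)), (NS, Shift),
             (NN, Zero), (NN, Sc (Var NN))}"

text \<open>Derivation trees: at each nonterminal occurrence the production used is recorded.\<close>
datatype der =
    DVar "nt \<times> nt lt" der
  | DZero
  | DSc der
  | DLam der
  | DApp der der
  | DClo der der
  | DSl der
  | DLift der
  | DShift

inductive is_der :: "grammar \<Rightarrow> nt lt \<Rightarrow> der \<Rightarrow> nt lt \<Rightarrow> bool" for G where
  "(X, \<beta>) \<in> G \<Longrightarrow> is_der G \<beta> d t \<Longrightarrow> is_der G (Var X) (DVar (X, \<beta>) d) t"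
| "is_der G Zero DZero Zero"
| "is_der G a d t \<Longrightarrow> is_der G (Sc a) (DSc d) (Sc t)"
| "is_der G a d t \<Longrightarrow> is_der G (Lam a) (DLam d) (Lam t)"
| "is_der G a d t \<Longrightarrow> is_der G b e u \<Longrightarrow> is_der G (App a b) (DApp d e) (App t u)"
| "is_der G a d t \<Longrightarrow> is_der G b e u \<Longrightarrow> is_der G (Clo a b) (DClo d e) (Clo t u)"
| "is_der G a d t \<Longrightarrow> is_der G (Sl a) (DSl d) (Sl t)"
| "is_der G a d t \<Longrightarrow> is_der G (Lift a) (DLift d) (Lift t)"
| "is_der G Shift DShift Shift"

definition lang :: "grammar \<Rightarrow> nt lt \<Rightarrow> nt lt set" where
  "lang G \<alpha> = {t. \<exists>d. is_der G \<alpha> d t}"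

definition unambiguous :: "grammar \<Rightarrow> nt \<Rightarrow> bool" where
  "unambiguous G X \<longleftrightarrow>
     (\<forall>t d1 d2. is_der G (Var X) d1 t \<longrightarrow> is_der G (Var X) d2 t \<longrightarrow> d1 = d2)"

definition lu_term :: "nt lt \<Rightarrow> bool" where
  "lu_term t \<longleftrightarrow> t \<in> lang Lambda (Var NT)"

fun is_idx :: "'v lt \<Rightarrow> bool" where
  "is_idx Zero = True"
| "is_idx (Sc n) = is_idx n"
| "is_idx _ = False"

fun root_step :: "'v lt \<Rightarrow> 'v lt option" where
  "root_step (Clo (App a b) s) = Some (App (Clo a s) (Clo b s))"
| "root_step (Clo (Lam a) s) = Some (Lam (Clo a (Lift s)))"
| "root_step (Clo Zero (Sl a)) = Some a"
| "root_step (Clo (Sc n) (Sl a)) = (if is_idx n then Some n else None)"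
| "root_step (Clo Zero (Lift s)) = Some Zero"
| "root_step (Clo (Sc n) (Lift s)) = (if is_idx n then Some (Clo (Clo n s) Shift) else None)"
| "root_step (Clo n Shift) = (if is_idx n then Some (Sc n) else None)"
| "root_step _ = None"

fun lo_step :: "'v lt \<Rightarrow> 'v lt option" where
  "lo_step t = (case root_step t of Some t' \<Rightarrow> Some t' | None \<Rightarrow>
     (case t of
        Sc x \<Rightarrow> map_option Sc (lo_step x)
      | Lam x \<Rightarrow> map_option Lam (lo_step x)
      | App x y \<Rightarrow> (case lo_step x of Some x' \<Rightarrow> Some (App x' y)
                     | None \<Rightarrow> map_option (App x) (lo_step y))
      | Clo x y \<Rightarrow> (case lo_step x of Some x' \<Rightarrow> Some (Clo x' y)
                     | None \<Rightarrow> map_option (Clo x) (lo_step y))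
      | Sl x \<Rightarrow> map_option Sl (lo_step x)
      | Lift x \<Rightarrow> map_option Lift (lo_step x)
      | _ \<Rightarrow> None))"

inductive norm_steps :: "'v lt \<Rightarrow> nat \<Rightarrow> bool" where
  "lo_step t = None \<Longrightarrow> norm_steps t 0"
| "lo_step t = Some t' \<Longrightarrow> norm_steps t' k \<Longrightarrow> norm_steps t (Suc k)"

definition Nn :: "nat \<Rightarrow> nt set" where
  "Nn n = {NT, NS, NN} \<union> NG ` {..n}"

definition upsilon_grammar :: "grammar \<Rightarrow> nat \<Rightarrow> bool" where
  "upsilon_grammar G n \<longleftrightarrow>
     finite G \<and> Lambda \<subseteq> G \<and>
     (\<forall>(X, \<alpha>) \<in> G. X \<in> Nn n \<and> nts \<alpha> \<subseteq> Nn n) \<and>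
     (\<forall>(X, \<alpha>) \<in> G. X \<in> {NT, NS, NN} \<longrightarrow> (X, \<alpha>) \<in> Lambda) \<and>
     (\<forall>k \<le> n. unambiguous G (NG k) \<and>
                lang G (Var (NG k)) = {t. lu_term t \<and> norm_steps t k})"

definition simple_grammar :: "grammar \<Rightarrow> bool" where
  "simple_grammar G \<longleftrightarrow>
     (\<forall>(X, \<alpha>) \<in> G. X \<in> nts \<alpha> \<longrightarrow>
        (X, \<alpha>) \<in> Lambda \<or>
        (\<exists>k. X = NG k \<and> \<alpha> \<in> {Lam (Var (NG k)), App (Var (NG 0)) (Var (NG k)),
                                  App (Var (NG k)) (Var (NG 0))})) \<and>
     (\<forall>(X, \<alpha>) \<in> G. \<forall>k. X = NG k \<and> X \<notin> nts \<alpha> \<longrightarrow>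
        nts \<alpha> \<subseteq> {NT, NS, NN} \<union> NG ` {..<k})"

definition verbose_grammar :: "grammar \<Rightarrow> bool" where
  "verbose_grammar G \<longleftrightarrow>
     \<not> (\<exists>(X, \<alpha>) \<in> G. \<exists>k \<sigma>s. \<alpha> = clos (Var (NG k)) \<sigma>s)"

definition fin_int_partition :: "grammar \<Rightarrow> nat \<Rightarrow> nt lt \<Rightarrow> nt lt \<Rightarrow> nt lt set \<Rightarrow> bool" where
  "fin_int_partition G n \<alpha> \<beta> P \<longleftrightarrow>
     finite P \<and> (\<forall>p \<in> P. nts p \<subseteq> Nn n) \<and>
     (\<forall>p \<in> P. \<forall>q \<in> P. p \<noteq> q \<longrightarrow> lang G p \<inter> lang G q = {}) \<and>
     \<Union> (lang G ` P) = lang G \<alpha> \<inter> lang G \<beta>"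

definition phi :: "nt lt" where
  "phi = Lam (Clo (Var NT) (Lift (Var NS)))"

text \<open>Delta_phi^n, for a given choice Pi of finite intersection partitions\<close>
definition Delta :: "grammar \<Rightarrow> nat \<Rightarrow> (nt lt \<Rightarrow> nt lt \<Rightarrow> nt lt set) \<Rightarrow> nt lt set" where
  "Delta G n Pi = (\<Union>\<gamma> \<in> {\<gamma>. (NG n, \<gamma>) \<in> G}.
                     Pi \<gamma> (clos phi (replicate (cwidth \<gamma>) (Var NS))))"

end

theory Submission
  imports Defs
begin

text \<open>
  The leftmost-outermost step of t = (\<lambda>a)[s][s1]...[sw] contracts its innermost closure,
  giving t' = (\<lambda>(a[\<Up>(s)]))[s1]...[sw]; so t normalises in n+1 steps iff t' \<in> L(G_n).
  By unambiguity, t' is derived from exactly one production G_n \<rightarrow> \<gamma>, and by verbosity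
  \<gamma> has the same closure width w as t': a production T[\<sigma>1]...[\<sigma>k] would derive
  0[\<up>]...[\<up>][...] with n+1 shifts, which needs more than n steps. Hence t' lies in exactly
  one member \<pi> of the partition of L(\<gamma>) \<inter> L(\<phi>[S]...[S]). Instantiating the nonterminals of
  \<pi> by terms headed by 0 or \<up> shows \<pi> = (\<lambda>(\<alpha>[\<Up>(\<sigma>)]))[\<sigma>1]...[\<sigma>w], and
  t' \<in> L(\<pi>) iff t \<in> L((\<lambda>\<alpha>)[\<sigma>][\<sigma>1]...[\<sigma>w]).
\<close>

section \<open>Closure stacks\<close>

lemma clos_Nil [simp]: "clos x [] = x"
  by (simp add: clos_def)

lemma clos_Cons [simp]: "clos x (y # ys) = clos (Clo x y) ys"
  by (simp add: clos_def)

lemma clos_snoc [simp]: "clos x (ys @ [y]) = Clo (clos x ys) y"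
  by (simp add: clos_def)

lemma clos_append: "clos x (ys @ zs) = clos (clos x ys) zs"
  by (simp add: clos_def)

lemma cwidth_clos [simp]: "cwidth (clos x ys) = cwidth x + length ys"
  by (induction ys arbitrary: x) auto

lemma nts_clos: "nts (clos x ys) = nts x \<union> (\<Union>y \<in> set ys. nts y)"
  by (induction ys arbitrary: x) auto

lemma clos_decomp: "\<exists>h ys. x = clos h ys \<and> cwidth h = 0"
proof (induction x)
  case (Clo x y)
  then obtain h ys where "x = clos h ys" "cwidth h = 0"
    by blast
  then have "Clo x y = clos h (ys @ [y])"
    by simp
  with \<open>cwidth h = 0\<close> show ?case
    by blast
qed (auto intro!: exI[of _ "[]"])

lemma clos_eq_clos_iff:
  assumes "cwidth x = 0" "cwidth y = 0"
  shows "clos x xs = clos y ys \<longleftrightarrow> x = y \<and> xs = ys"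
proof (induction xs arbitrary: ys rule: rev_induct)
  case Nil
  then show ?case using assms by (cases ys rule: rev_cases) auto
next
  case (snoc z xs)
  then show ?case using assms by (cases ys rule: rev_cases) auto
qed

fun stack_head :: "'v lt \<Rightarrow> 'v lt" where
  "stack_head (Clo x y) = stack_head x"
| "stack_head x = x"

lemma stack_head_clos [simp]: "stack_head (clos x ys) = stack_head x"
  by (induction ys arbitrary: x) auto

section \<open>Languages of templates\<close>

inductive_cases is_der_VarE: "is_der G (Var X) d t"
inductive_cases is_der_ZeroE: "is_der G Zero d t"
inductive_cases is_der_ScE: "is_der G (Sc p) d t"
inductive_cases is_der_LamE: "is_der G (Lam p) d t"
inductive_cases is_der_AppE: "is_der G (App p q) d t"
inductive_cases is_der_CloE: "is_der G (Clo p q) d t"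
inductive_cases is_der_SlE: "is_der G (Sl p) d t"
inductive_cases is_der_LiftE: "is_der G (Lift p) d t"
inductive_cases is_der_ShiftE: "is_der G Shift d t"

lemma lang_Var: "t \<in> lang G (Var X) \<longleftrightarrow> (\<exists>\<beta>. (X, \<beta>) \<in> G \<and> t \<in> lang G \<beta>)"
  unfolding lang_def by (auto elim!: is_der_VarE intro: is_der.intros)

lemma lang_VarI: "(X, \<beta>) \<in> G \<Longrightarrow> t \<in> lang G \<beta> \<Longrightarrow> t \<in> lang G (Var X)"
  using lang_Var by blast

lemma lang_Zero [simp]: "t \<in> lang G Zero \<longleftrightarrow> t = Zero"
  unfolding lang_def by (auto elim!: is_der_ZeroE intro: is_der.intros)

lemma lang_Sc [simp]: "t \<in> lang G (Sc p) \<longleftrightarrow> (\<exists>u. t = Sc u \<and> u \<in> lang G p)"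
  unfolding lang_def by (auto elim!: is_der_ScE intro: is_der.intros)

lemma lang_Lam [simp]: "t \<in> lang G (Lam p) \<longleftrightarrow> (\<exists>u. t = Lam u \<and> u \<in> lang G p)"
  unfolding lang_def by (auto elim!: is_der_LamE intro: is_der.intros)

lemma lang_App [simp]:
  "t \<in> lang G (App p q) \<longleftrightarrow> (\<exists>u v. t = App u v \<and> u \<in> lang G p \<and> v \<in> lang G q)"
  unfolding lang_def by (auto elim!: is_der_AppE intro: is_der.intros)

lemma lang_Clo [simp]:
  "t \<in> lang G (Clo p q) \<longleftrightarrow> (\<exists>u v. t = Clo u v \<and> u \<in> lang G p \<and> v \<in> lang G q)"
  unfolding lang_def by (auto elim!: is_der_CloE intro: is_der.intros)

lemma lang_Sl [simp]: "t \<in> lang G (Sl p) \<longleftrightarrow> (\<exists>u. t = Sl u \<and> u \<in> lang G p)"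
  unfolding lang_def by (auto elim!: is_der_SlE intro: is_der.intros)

lemma lang_Lift [simp]: "t \<in> lang G (Lift p) \<longleftrightarrow> (\<exists>u. t = Lift u \<and> u \<in> lang G p)"
  unfolding lang_def by (auto elim!: is_der_LiftE intro: is_der.intros)

lemma lang_Shift [simp]: "t \<in> lang G Shift \<longleftrightarrow> t = Shift"
  unfolding lang_def by (auto elim!: is_der_ShiftE intro: is_der.intros)

lemma lang_mono:
  assumes "H \<subseteq> G"
  shows "lang H p \<subseteq> lang G p"
proof -
  have "is_der G p d t" if "is_der H p d t" for p d t
    using that assms by (induction rule: is_der.induct) (auto intro: is_der.intros)
  then show ?thesis
    unfolding lang_def by blast
qed

lemma lang_clos_iff:
  assumes "length xs = length ps"
  shows "clos x xs \<in> lang G (clos p ps) \<longleftrightarrow>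
    x \<in> lang G p \<and> list_all2 (\<lambda>u q. u \<in> lang G q) xs ps"
  using assms by (induction xs ps arbitrary: x p rule: list_induct2) auto

lemma lang_closE:
  assumes "t \<in> lang G (clos p ps)"
  obtains x xs where "t = clos x xs" "x \<in> lang G p" "list_all2 (\<lambda>u q. u \<in> lang G q) xs ps"
  using assms
proof (induction ps arbitrary: t thesis rule: rev_induct)
  case (snoc q ps)
  then obtain u v where "t = Clo u v" "u \<in> lang G (clos p ps)" "v \<in> lang G q"
    by auto
  moreover obtain x xs where "u = clos x xs" "x \<in> lang G p" "list_all2 (\<lambda>u q. u \<in> lang G q) xs ps"
    using snoc.IH \<open>u \<in> lang G (clos p ps)\<close> by blast
  ultimately show ?case
    using snoc.prems(1)[of x "xs @ [v]"] by (simp add: list_all2_appendI)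
qed auto

lemma cwidth_lang_eq_0:
  assumes "t \<in> lang G p" "cwidth p = 0" "\<forall>X. p \<noteq> Var X"
  shows "cwidth t = 0"
  using assms by (cases p) auto

lemma unambiguous_production_unique:
  assumes "unambiguous G X" "(X, \<gamma>) \<in> G" "(X, \<gamma>') \<in> G" "t \<in> lang G \<gamma>" "t \<in> lang G \<gamma>'"
  shows "\<gamma> = \<gamma>'"
proof -
  obtain d d' where "is_der G \<gamma> d t" "is_der G \<gamma>' d' t"
    using assms(4,5) unfolding lang_def by blast
  then have "is_der G (Var X) (DVar (X, \<gamma>) d) t" "is_der G (Var X) (DVar (X, \<gamma>') d') t"
    using assms(2,3) by (auto intro: is_der.intros(1))
  then show ?thesis
    using assms(1) unfolding unambiguous_def by blast
qed

fun inst_nts :: "('v \<Rightarrow> 'w lt) \<Rightarrow> 'v lt \<Rightarrow> 'w lt" where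
  "inst_nts f (Var X) = f X"
| "inst_nts f Zero = Zero"
| "inst_nts f (Sc p) = Sc (inst_nts f p)"
| "inst_nts f (Lam p) = Lam (inst_nts f p)"
| "inst_nts f (App p q) = App (inst_nts f p) (inst_nts f q)"
| "inst_nts f (Clo p q) = Clo (inst_nts f p) (inst_nts f q)"
| "inst_nts f (Sl p) = Sl (inst_nts f p)"
| "inst_nts f (Lift p) = Lift (inst_nts f p)"
| "inst_nts f Shift = Shift"

lemma inst_nts_clos: "inst_nts f (clos p ps) = clos (inst_nts f p) (map (inst_nts f) ps)"
  by (induction ps arbitrary: p) auto

lemma inst_nts_in_lang: "(\<And>X. X \<in> nts p \<Longrightarrow> f X \<in> lang G (Var X)) \<Longrightarrow> inst_nts f p \<in> lang G p"
  by (induction p) auto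


lemma Lam_step_lang_iff:
  "length \<sigma>s = length ss \<Longrightarrow>
    clos (Clo (Lam a) s) ss \<in> lang G (clos (Clo (Lam \<alpha>) \<sigma>) \<sigma>s) \<longleftrightarrow>
    clos (Lam (Clo a (Lift s))) ss \<in> lang G (clos (Lam (Clo \<alpha> (Lift \<sigma>))) \<sigma>s)"
  by (simp add: lang_clos_iff)

lemma cwidth_lang_clos_Lam: "t \<in> lang G (clos (Lam p) ps) \<Longrightarrow> cwidth t = length ps"
  by (auto elim!: lang_closE simp: list_all2_lengthD)

lemma list_all2_replicate_right: "list_all2 P xs (replicate (length xs) y) \<longleftrightarrow> (\<forall>x \<in> set xs. P x y)"
  by (induction xs) auto

section \<open>The grammar Lambda of \<lambda>\<upsilon>-terms\<close>

lemma lang_Lambda_NN: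
  "t \<in> lang Lambda (Var NN) \<longleftrightarrow> t = Zero \<or> (\<exists>u. t = Sc u \<and> u \<in> lang Lambda (Var NN))"
  by (subst lang_Var) (simp add: Lambda_def conj_disj_distribR ex_disj_distrib)

lemma lang_Lambda_NS:
  "t \<in> lang Lambda (Var NS) \<longleftrightarrow> (\<exists>u. t = Sl u \<and> u \<in> lang Lambda (Var NT))
    \<or> (\<exists>u. t = Lift u \<and> u \<in> lang Lambda (Var NS)) \<or> t = Shift"
  by (subst lang_Var) (simp add: Lambda_def conj_disj_distribR ex_disj_distrib)

lemma lang_Lambda_NT:
  "t \<in> lang Lambda (Var NT) \<longleftrightarrow> t \<in> lang Lambda (Var NN)
    \<or> (\<exists>u. t = Lam u \<and> u \<in> lang Lambda (Var NT))
    \<or> (\<exists>u v. t = App u v \<and> u \<in> lang Lambda (Var NT) \<and> v \<in> lang Lambda (Var NT))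
    \<or> (\<exists>u v. t = Clo u v \<and> u \<in> lang Lambda (Var NT) \<and> v \<in> lang Lambda (Var NS))"
  by (subst lang_Var) (simp add: Lambda_def conj_disj_distribR ex_disj_distrib)

lemma Clo_in_lang_Lambda_NT:
  "Clo u v \<in> lang Lambda (Var NT) \<longleftrightarrow> u \<in> lang Lambda (Var NT) \<and> v \<in> lang Lambda (Var NS)"
  by (subst lang_Lambda_NT) (simp add: lang_Lambda_NN[of "Clo u v"])

lemma Lam_in_lang_Lambda_NT: "Lam u \<in> lang Lambda (Var NT) \<longleftrightarrow> u \<in> lang Lambda (Var NT)"
  by (subst lang_Lambda_NT) (simp add: lang_Lambda_NN[of "Lam u"])

lemma Lift_in_lang_Lambda_NS: "Lift u \<in> lang Lambda (Var NS) \<longleftrightarrow> u \<in> lang Lambda (Var NS)"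
  by (subst lang_Lambda_NS) simp

lemma Zero_in_lang_Lambda_NT: "Zero \<in> lang Lambda (Var NT)"
  by (simp add: lang_Lambda_NT[of Zero] lang_Lambda_NN[of Zero])

lemma Shift_in_lang_Lambda_NS: "Shift \<in> lang Lambda (Var NS)"
  by (simp add: lang_Lambda_NS[of Shift])

lemma clos_in_lang_Lambda_NT:
  "clos x xs \<in> lang Lambda (Var NT) \<longleftrightarrow>
    x \<in> lang Lambda (Var NT) \<and> (\<forall>y \<in> set xs. y \<in> lang Lambda (Var NS))"
  by (induction xs rule: rev_induct) (auto simp: Clo_in_lang_Lambda_NT)

lemma cwidth_lang_Lambda_NS_NN:
  assumes "X \<in> {NS, NN}" "t \<in> lang Lambda (Var X)"
  shows "cwidth t = 0"
  using assms by (auto simp: lang_Lambda_NS[of t] lang_Lambda_NN[of t])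

lemma NG_in_Nn_iff [simp]: "NG k \<in> Nn n \<longleftrightarrow> k \<le> n"
  by (auto simp: Nn_def)

lemma upsilon_grammar_Lambda: "upsilon_grammar G n \<Longrightarrow> Lambda \<subseteq> G"
  by (simp add: upsilon_grammar_def)

lemma upsilon_grammar_nts: "upsilon_grammar G n \<Longrightarrow> (X, \<alpha>) \<in> G \<Longrightarrow> nts \<alpha> \<subseteq> Nn n"
  unfolding upsilon_grammar_def by fast

lemma upsilon_grammar_lang_NG:
  "upsilon_grammar G n \<Longrightarrow> k \<le> n \<Longrightarrow> lang G (Var (NG k)) = {t. lu_term t \<and> norm_steps t k}"
  by (simp add: upsilon_grammar_def)

lemma upsilon_grammar_unambiguous: "upsilon_grammar G n \<Longrightarrow> k \<le> n \<Longrightarrow> unambiguous G (NG k)"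
  by (simp add: upsilon_grammar_def)

lemma lang_Var_eq_Lambda:
  assumes "upsilon_grammar G n" "X \<in> {NT, NS, NN}"
  shows "lang G (Var X) = lang Lambda (Var X)"
proof
  have base: "(Y, \<beta>) \<in> Lambda" if "(Y, \<beta>) \<in> G" "Y \<in> {NT, NS, NN}" for Y \<beta>
    using assms(1) that unfolding upsilon_grammar_def by fast
  have base_der: "t \<in> lang Lambda p" if "is_der G p d t" "nts p \<subseteq> {NT, NS, NN}" for p d t
    using that
  proof (induction rule: is_der.induct)
    case (1 Y \<beta> d t)
    then have "(Y, \<beta>) \<in> Lambda"
      using base by simp
    moreover from this have "nts \<beta> \<subseteq> {NT, NS, NN}"
      by (auto simp: Lambda_def)
    ultimately show ?case
      using "1.IH" lang_Var by blast
  qed force+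
  show "lang G (Var X) \<subseteq> lang Lambda (Var X)"
  proof
    fix t
    assume "t \<in> lang G (Var X)"
    then obtain d where "is_der G (Var X) d t"
      unfolding lang_def by blast
    then show "t \<in> lang Lambda (Var X)"
      using base_der assms(2) by simp
  qed
  show "lang Lambda (Var X) \<subseteq> lang G (Var X)"
    using lang_mono[OF upsilon_grammar_Lambda[OF assms(1)]] .
qed

section \<open>Leftmost-outermost reduction\<close>

declare lo_step.simps [simp del]

lemma lo_step_root: "root_step t = Some t' \<Longrightarrow> lo_step t = Some t'"
  by (subst lo_step.simps) simp

lemma lo_step_Clo:
  "root_step (Clo x y) = None \<Longrightarrow> lo_step (Clo x y) =
    (case lo_step x of Some x' \<Rightarrow> Some (Clo x' y) | None \<Rightarrow> map_option (Clo x) (lo_step y))"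
  by (subst lo_step.simps) simp

lemma lo_step_Zero: "lo_step Zero = None"
  by (subst lo_step.simps) simp

lemma lo_step_Sc: "lo_step (Sc x) = map_option Sc (lo_step x)"
  by (subst lo_step.simps) simp

lemma lo_step_clos:
  assumes "cwidth x \<noteq> 0" "lo_step x = Some x'"
  shows "lo_step (clos x qs) = Some (clos x' qs)"
proof (induction qs rule: rev_induct)
  case (snoc q qs)
  have "cwidth (clos x qs) \<noteq> 0"
    using assms(1) by simp
  then obtain u v where "clos x qs = Clo u v"
    by (cases "clos x qs") auto
  then have "root_step (Clo (clos x qs) q) = None"
    by (cases q) auto
  with snoc.IH show ?case
    by (simp add: lo_step_Clo)
qed (simp add: assms)

lemma norm_steps_step:
  "lo_step t = Some t' \<Longrightarrow> norm_steps t k \<longleftrightarrow> (\<exists>k'. k = Suc k' \<and> norm_steps t' k')"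
  by (auto elim: norm_steps.cases intro: norm_steps.intros)

lemma lo_step_Clo_Lam_clos:
  "lo_step (clos (Clo (Lam a) s) ss) = Some (clos (Lam (Clo a (Lift s))) ss)"
  using lo_step_clos[of "Clo (Lam a) s"] lo_step_root[of "Clo (Lam a) s"] by simp

lemma is_idx_Sc_funpow: "is_idx ((Sc ^^ j) Zero)"
  by (induction j) auto

lemma lo_step_shift:
  "lo_step (clos ((Sc ^^ j) Zero) (Shift # qs)) = Some (clos ((Sc ^^ Suc j) Zero) qs)"
proof -
  have "lo_step (Clo ((Sc ^^ j) Zero) Shift) = Some ((Sc ^^ Suc j) Zero)"
    by (rule lo_step_root) (cases j, simp_all add: is_idx_Sc_funpow)
  from lo_step_clos[OF _ this] show ?thesis
    by simp
qed

lemma norm_steps_shifts_ge: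
  "norm_steps (clos ((Sc ^^ j) Zero) (replicate i Shift @ qs)) k \<Longrightarrow> i \<le> k"
proof (induction i arbitrary: j k)
  case (Suc i)
  have "lo_step (clos ((Sc ^^ j) Zero) (replicate (Suc i) Shift @ qs)) =
      Some (clos ((Sc ^^ Suc j) Zero) (replicate i Shift @ qs))"
    using lo_step_shift by simp
  with Suc.prems obtain k' where "k = Suc k'"
      "norm_steps (clos ((Sc ^^ Suc j) Zero) (replicate i Shift @ qs)) k'"
    using norm_steps_step by blast
  with Suc.IH show ?case
    by blast
qed simp

lemma norm_steps_shifts:
  "norm_steps (clos ((Sc ^^ j) (Zero :: 'v lt)) (replicate i Shift)) i"
proof (induction i arbitrary: j)
  case 0
  have "lo_step ((Sc ^^ j) (Zero :: 'v lt)) = None"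
    by (induction j) (simp_all add: lo_step_Zero lo_step_Sc)
  then show ?case
    by (simp add: norm_steps.intros(1))
next
  case (Suc i)
  from norm_steps.intros(2)[OF lo_step_shift Suc.IH] show ?case
    by simp
qed

section \<open>Closure width of the productions of G_n\<close>

definition shifted_zero :: "nat \<Rightarrow> 'v lt" where
  "shifted_zero k = clos Zero (replicate k Shift)"

lemma shifted_zero_in_lang_Lambda_NT: "shifted_zero k \<in> lang Lambda (Var NT)"
  by (simp add: shifted_zero_def clos_in_lang_Lambda_NT Zero_in_lang_Lambda_NT Shift_in_lang_Lambda_NS)

lemma norm_steps_shifted_zero: "norm_steps (shifted_zero k :: 'v lt) k"
  using norm_steps_shifts[of 0 k] by (simp add: shifted_zero_def)

lemma norm_steps_clos_shifted_zero_ge: "norm_steps (clos (shifted_zero i) qs) k \<Longrightarrow> i \<le> k"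
  using norm_steps_shifts_ge[of 0 i qs k] by (simp add: shifted_zero_def clos_append)

fun nt_witness :: "nt \<Rightarrow> nt lt" where
  "nt_witness NS = Shift"
| "nt_witness (NG k) = shifted_zero k"
| "nt_witness _ = Zero"

lemma nt_witness_in_lang:
  assumes "upsilon_grammar G n" "X \<in> Nn n"
  shows "nt_witness X \<in> lang G (Var X)"
proof (cases X)
  case (NG k)
  with assms have "lang G (Var X) = {t. lu_term t \<and> norm_steps t k}"
    by (simp add: upsilon_grammar_lang_NG)
  with NG show ?thesis
    by (simp add: lu_term_def shifted_zero_in_lang_Lambda_NT norm_steps_shifted_zero)
qed (use assms(1) in \<open>simp_all add: lang_Var_eq_Lambda Zero_in_lang_Lambda_NT Shift_in_lang_Lambda_NS
    lang_Lambda_NN[of Zero]\<close>)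

lemma stack_head_nt_witness: "stack_head (nt_witness X) \<in> {Zero, Shift}"
  by (cases X) (simp_all add: shifted_zero_def)

lemma shifted_zero_neq:
  "shifted_zero k \<noteq> Lift v"
  "shifted_zero k \<noteq> Clo u (Lift v)"
  by (cases k; simp add: shifted_zero_def flip: replicate_append_same)+

lemma nt_witness_neq [simp]:
  "nt_witness X \<noteq> Lift v"
  "nt_witness X \<noteq> Clo u (Lift v)"
  by (cases X; simp add: shifted_zero_neq)+

lemma verbose_grammarD: "verbose_grammar G \<Longrightarrow> (X, clos (Var (NG k)) \<sigma>s) \<notin> G"
  unfolding verbose_grammar_def by blast

lemma no_production_clos_NT:
  assumes "upsilon_grammar G n"
  shows "(NG n, clos (Var NT) \<sigma>s) \<notin> G"
proof
  assume prod: "(NG n, clos (Var NT) \<sigma>s) \<in> G"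
  \<comment> \<open>Instantiating T by 0[\<up>]...[\<up>] with n+1 shifts gives a member of L(G_n)
    that needs at least n+1 steps, whatever closures follow.\<close>
  define f where "f = nt_witness(NT := shifted_zero (Suc n))"
  have f_lang: "f X \<in> lang G (Var X)" if "X \<in> nts (clos (Var NT) \<sigma>s)" for X
  proof (cases "X = NT")
    case True
    then show ?thesis
      using shifted_zero_in_lang_Lambda_NT lang_Var_eq_Lambda[OF assms] by (simp add: f_def)
  next
    case False
    then show ?thesis
      using upsilon_grammar_nts[OF assms prod] that nt_witness_in_lang[OF assms] by (auto simp: f_def)
  qed
  have "inst_nts f (clos (Var NT) \<sigma>s) \<in> lang G (Var (NG n))"
    using lang_VarI[OF prod inst_nts_in_lang[OF f_lang]] .
  then have "norm_steps (clos (shifted_zero (Suc n)) (map (inst_nts f) \<sigma>s)) n"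
    using upsilon_grammar_lang_NG[OF assms, of n] by (simp add: inst_nts_clos f_def)
  then have "Suc n \<le> n"
    by (rule norm_steps_clos_shifted_zero_ge)
  then show False
    by simp
qed

lemma cwidth_production:
  assumes "upsilon_grammar G n" "verbose_grammar G"
    and prod: "(NG n, \<gamma>) \<in> G" and "t \<in> lang G \<gamma>"
  shows "cwidth t = cwidth \<gamma>"
proof -
  obtain h \<sigma>s where \<gamma>: "\<gamma> = clos h \<sigma>s" "cwidth h = 0"
    using clos_decomp by blast
  with \<open>t \<in> lang G \<gamma>\<close> obtain x xs where t: "t = clos x xs" "x \<in> lang G h"
    and "list_all2 (\<lambda>u q. u \<in> lang G q) xs \<sigma>s"
    using lang_closE by metis
  then have "length xs = length \<sigma>s"
    using list_all2_lengthD by blast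
  moreover have "cwidth x = 0"
  proof (rule ccontr)
    assume x: "cwidth x \<noteq> 0"
    then obtain X where h: "h = Var X"
      using cwidth_lang_eq_0[OF t(2) \<gamma>(2)] by auto
    show False
    proof (cases X)
      case NT
      then show False
        using no_production_clos_NT[OF assms(1)] prod \<gamma> h by simp
    next
      case NS
      then have "x \<in> lang Lambda (Var NS)"
        using t(2) h lang_Var_eq_Lambda[OF assms(1)] by simp
      then show False
        using x cwidth_lang_Lambda_NS_NN[of NS] by simp
    next
      case NN
      then have "x \<in> lang Lambda (Var NN)"
        using t(2) h lang_Var_eq_Lambda[OF assms(1)] by simp
      then show False
        using x cwidth_lang_Lambda_NS_NN[of NN] by simp
    next
      case (NG k)
      then show False
        using verbose_grammarD[OF assms(2)] prod \<gamma> h by simp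
    qed
  qed
  ultimately show ?thesis
    using t \<gamma> by simp
qed

section \<open>The set \<Delta>\<close>

abbreviation phi_stack :: "nat \<Rightarrow> nt lt" where
  "phi_stack w \<equiv> clos phi (replicate w (Var NS))"

lemma lang_subset_phi_stack_shape:
  assumes "upsilon_grammar G n" "nts \<pi> \<subseteq> Nn n" "lang G \<pi> \<subseteq> lang G (phi_stack w)"
  shows "\<exists>\<alpha> \<sigma> \<sigma>s. \<pi> = clos (Lam (Clo \<alpha> (Lift \<sigma>))) \<sigma>s"
proof -
  \<comment> \<open>Witnesses start with 0 or \<up>, so \<pi> cannot have a nonterminal where phi_stack
    has a constructor.\<close>
  let ?inst = "inst_nts nt_witness"
  have "?inst \<pi> \<in> lang G \<pi>"
    using assms(2) nt_witness_in_lang[OF assms(1)] by (blast intro: inst_nts_in_lang)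
  with assms(3) obtain x xs where inst: "?inst \<pi> = clos x xs" "x \<in> lang G phi"
    using lang_closE by blast
  then obtain y z where x: "x = Lam (Clo y (Lift z))"
    by (auto simp: phi_def)
  obtain h \<sigma>s where \<pi>: "\<pi> = clos h \<sigma>s" "cwidth h = 0"
    using clos_decomp by blast
  have inst_clos: "?inst \<pi> = clos (?inst h) (map ?inst \<sigma>s)"
    by (simp add: \<pi>(1) inst_nts_clos)
  have h_not_Var: "h \<noteq> Var X" for X
  proof
    assume "h = Var X"
    then have "stack_head (?inst \<pi>) = stack_head (nt_witness X)"
      by (simp add: inst_clos)
    also have "stack_head (?inst \<pi>) = x"
      by (simp add: inst x)
    finally show False
      using stack_head_nt_witness[of X] x by auto
  qed
  then have "cwidth (?inst h) = 0"
    using \<pi>(2) by (cases h) auto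
  moreover have "clos (?inst h) (map ?inst \<sigma>s) = clos x xs"
    using inst inst_clos by simp
  ultimately have "?inst h = x"
    using clos_eq_clos_iff[of "?inst h" x] x by simp
  with h_not_Var obtain p where h: "h = Lam p" and p: "?inst p = Clo y (Lift z)"
    by (cases h) (auto simp: x)
  then obtain \<alpha> q where "p = Clo \<alpha> q" "?inst q = Lift z"
    by (cases p) auto
  moreover from this obtain \<sigma> where "q = Lift \<sigma>"
    by (cases q) auto
  ultimately show ?thesis
    using \<pi>(1) h by blast
qed

lemma Lam_step_in_phi_stack_iff:
  "clos (Lam (Clo a (Lift s))) ss \<in> lang G (phi_stack (length ss)) \<longleftrightarrow>
    a \<in> lang G (Var NT) \<and> s \<in> lang G (Var NS) \<and> (\<forall>y \<in> set ss. y \<in> lang G (Var NS))"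
  by (simp add: phi_def lang_clos_iff list_all2_replicate_right)

locale partitioned_upsilon_grammar =
  fixes G :: grammar and n :: nat and Pi :: "nt lt \<Rightarrow> nt lt \<Rightarrow> nt lt set"
  assumes upsilon: "upsilon_grammar G n"
    and partitions: "\<And>\<alpha> \<beta>. nts \<alpha> \<subseteq> Nn n \<Longrightarrow> nts \<beta> \<subseteq> Nn n \<Longrightarrow>
      fin_int_partition G n \<alpha> \<beta> (Pi \<alpha> \<beta>)"
begin

lemma fin_int_partition_production:
  assumes "(NG n, \<gamma>) \<in> G"
  shows "fin_int_partition G n \<gamma> (phi_stack w) (Pi \<gamma> (phi_stack w))"
proof (rule partitions)
  show "nts \<gamma> \<subseteq> Nn n"
    using upsilon_grammar_nts[OF upsilon assms] .
  show "nts (phi_stack w) \<subseteq> Nn n"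
    by (auto simp: nts_clos phi_def Nn_def)
qed

lemma Delta_memE:
  assumes "\<pi> \<in> Delta G n Pi"
  obtains \<gamma> where "(NG n, \<gamma>) \<in> G" "\<pi> \<in> Pi \<gamma> (phi_stack (cwidth \<gamma>))" "nts \<pi> \<subseteq> Nn n"
    "lang G \<pi> \<subseteq> lang G \<gamma>" "lang G \<pi> \<subseteq> lang G (phi_stack (cwidth \<gamma>))"
proof -
  obtain \<gamma> where \<gamma>: "(NG n, \<gamma>) \<in> G" "\<pi> \<in> Pi \<gamma> (phi_stack (cwidth \<gamma>))"
    using assms unfolding Delta_def by blast
  have part: "fin_int_partition G n \<gamma> (phi_stack (cwidth \<gamma>)) (Pi \<gamma> (phi_stack (cwidth \<gamma>)))"
    using fin_int_partition_production[OF \<gamma>(1)] .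
  then have "lang G \<pi> \<subseteq> lang G \<gamma> \<inter> lang G (phi_stack (cwidth \<gamma>))" "nts \<pi> \<subseteq> Nn n"
    using \<gamma>(2) unfolding fin_int_partition_def by blast+
  with \<gamma> show ?thesis
    using that by blast
qed

lemma Delta_shape:
  assumes "\<pi> \<in> Delta G n Pi"
  shows "\<exists>\<alpha> \<sigma> \<sigma>s. \<pi> = clos (Lam (Clo \<alpha> (Lift \<sigma>))) \<sigma>s"
proof -
  obtain \<gamma> :: "nt lt" where "nts \<pi> \<subseteq> Nn n" "lang G \<pi> \<subseteq> lang G (phi_stack (cwidth \<gamma>))"
    using Delta_memE[OF assms] by metis
  then show ?thesis
    by (rule lang_subset_phi_stack_shape[OF upsilon])
qed

lemma Delta_unique_cover:
  assumes "verbose_grammar G" and t_phi: "t \<in> lang G (phi_stack (cwidth t))"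
  shows "t \<in> lang G (Var (NG n)) \<longleftrightarrow> (\<exists>!\<pi>. \<pi> \<in> Delta G n Pi \<and> t \<in> lang G \<pi>)"
proof
  assume "t \<in> lang G (Var (NG n))"
  then obtain \<gamma> where \<gamma>: "(NG n, \<gamma>) \<in> G" "t \<in> lang G \<gamma>"
    using lang_Var by blast
  have "cwidth t = cwidth \<gamma>"
    using cwidth_production[OF upsilon assms(1) \<gamma>] .
  have part: "fin_int_partition G n \<gamma> (phi_stack (cwidth \<gamma>)) (Pi \<gamma> (phi_stack (cwidth \<gamma>)))"
    using fin_int_partition_production[OF \<gamma>(1)] .
  have "t \<in> lang G \<gamma> \<inter> lang G (phi_stack (cwidth \<gamma>))"
    using t_phi \<gamma>(2) \<open>cwidth t = cwidth \<gamma>\<close> by simp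
  also have "\<dots> = \<Union> (lang G ` Pi \<gamma> (phi_stack (cwidth \<gamma>)))"
    using part by (simp add: fin_int_partition_def)
  finally obtain \<pi> where \<pi>: "\<pi> \<in> Pi \<gamma> (phi_stack (cwidth \<gamma>))" "t \<in> lang G \<pi>"
    by blast
  show "\<exists>!\<pi>. \<pi> \<in> Delta G n Pi \<and> t \<in> lang G \<pi>"
  proof (rule ex1I)
    show "\<pi> \<in> Delta G n Pi \<and> t \<in> lang G \<pi>"
      using \<gamma>(1) \<pi> unfolding Delta_def by blast
  next
    fix \<pi>'
    assume \<pi>': "\<pi>' \<in> Delta G n Pi \<and> t \<in> lang G \<pi>'"
    then obtain \<gamma>' where \<gamma>': "(NG n, \<gamma>') \<in> G" "\<pi>' \<in> Pi \<gamma>' (phi_stack (cwidth \<gamma>'))"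
      "lang G \<pi>' \<subseteq> lang G \<gamma>'"
      using Delta_memE by metis
    have "\<gamma>' = \<gamma>"
      using unambiguous_production_unique[OF upsilon_grammar_unambiguous[OF upsilon order.refl]]
        \<gamma> \<gamma>' \<pi>' by blast
    then show "\<pi>' = \<pi>"
      using part \<gamma>'(2) \<pi> \<pi>' unfolding fin_int_partition_def by blast
  qed
next
  assume "\<exists>!\<pi>. \<pi> \<in> Delta G n Pi \<and> t \<in> lang G \<pi>"
  then obtain \<pi> where "\<pi> \<in> Delta G n Pi" "t \<in> lang G \<pi>"
    by blast
  then show "t \<in> lang G (Var (NG n))"
    using Delta_memE lang_VarI by (metis subsetD)
qed

lemma Lam_step_in_Delta_member_iff:
  assumes "\<pi> \<in> Delta G n Pi"
  shows "clos (Lam (Clo a (Lift s))) ss \<in> lang G \<pi> \<longleftrightarrow>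
    (\<exists>\<alpha> \<sigma> \<sigma>s. \<pi> = clos (Lam (Clo \<alpha> (Lift \<sigma>))) \<sigma>s \<and> length \<sigma>s = length ss \<and>
       clos (Clo (Lam a) s) ss \<in> lang G (clos (Clo (Lam \<alpha>) \<sigma>) \<sigma>s))"
proof
  assume t': "clos (Lam (Clo a (Lift s))) ss \<in> lang G \<pi>"
  obtain \<alpha> \<sigma> \<sigma>s where \<pi>: "\<pi> = clos (Lam (Clo \<alpha> (Lift \<sigma>))) \<sigma>s"
    using Delta_shape[OF assms] by blast
  with t' have "length \<sigma>s = length ss"
    using cwidth_lang_clos_Lam by fastforce
  with t' \<pi> show "\<exists>\<alpha> \<sigma> \<sigma>s. \<pi> = clos (Lam (Clo \<alpha> (Lift \<sigma>))) \<sigma>s \<and> length \<sigma>s = length ss \<and>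
       clos (Clo (Lam a) s) ss \<in> lang G (clos (Clo (Lam \<alpha>) \<sigma>) \<sigma>s)"
    using Lam_step_lang_iff by blast
qed (use Lam_step_lang_iff in blast)

end

theorem mainTheorem7:
  fixes G :: grammar and n :: nat
    and Pi :: "nt lt \<Rightarrow> nt lt \<Rightarrow> nt lt set"
    and a s :: "nt lt" and ss :: "nt lt list"
  assumes "upsilon_grammar G n"
    and "simple_grammar G"
    and "verbose_grammar G"
    and "\<forall>\<alpha> \<beta>. nts \<alpha> \<subseteq> Nn n \<and> nts \<beta> \<subseteq> Nn n \<longrightarrow> fin_int_partition G n \<alpha> \<beta> (Pi \<alpha> \<beta>)"
    and "lu_term (clos (Clo (Lam a) s) ss)"
  shows "norm_steps (clos (Clo (Lam a) s) ss) (Suc n) \<longleftrightarrow>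
    (\<exists>!\<pi>. \<pi> \<in> Delta G n Pi \<and>
       (\<exists>\<alpha> \<sigma> \<sigma>s. \<pi> = clos (Lam (Clo \<alpha> (Lift \<sigma>))) \<sigma>s \<and> length \<sigma>s = length ss \<and>
          clos (Clo (Lam a) s) ss \<in> lang G (clos (Clo (Lam \<alpha>) \<sigma>) \<sigma>s)))"
proof -
  interpret partitioned_upsilon_grammar G n Pi
    using assms(1,4) by unfold_locales blast+
  let ?t' = "clos (Lam (Clo a (Lift s))) ss"
  have subterms: "a \<in> lang Lambda (Var NT)" "s \<in> lang Lambda (Var NS)"
    "\<forall>y \<in> set ss. y \<in> lang Lambda (Var NS)"
    using assms(5) by (simp_all add: lu_term_def clos_in_lang_Lambda_NT Clo_in_lang_Lambda_NT
        Lam_in_lang_Lambda_NT)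
  have "norm_steps (clos (Clo (Lam a) s) ss) (Suc n) \<longleftrightarrow> norm_steps ?t' n"
    using norm_steps_step[OF lo_step_Clo_Lam_clos, where k = "Suc n"] by simp
  also have "\<dots> \<longleftrightarrow> ?t' \<in> lang G (Var (NG n))"
    using subterms by (simp add: upsilon_grammar_lang_NG[OF assms(1)] lu_term_def
        clos_in_lang_Lambda_NT Lam_in_lang_Lambda_NT Clo_in_lang_Lambda_NT Lift_in_lang_Lambda_NS)
  also have "\<dots> \<longleftrightarrow> (\<exists>!\<pi>. \<pi> \<in> Delta G n Pi \<and> ?t' \<in> lang G \<pi>)"
    using Delta_unique_cover[OF assms(3)] subterms
    by (simp add: Lam_step_in_phi_stack_iff lang_Var_eq_Lambda[OF assms(1)])
  also have "\<dots> \<longleftrightarrow> (\<exists>!\<pi>. \<pi> \<in> Delta G n Pi \<and>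
       (\<exists>\<alpha> \<sigma> \<sigma>s. \<pi> = clos (Lam (Clo \<alpha> (Lift \<sigma>))) \<sigma>s \<and> length \<sigma>s = length ss \<and>
          clos (Clo (Lam a) s) ss \<in> lang G (clos (Clo (Lam \<alpha>) \<sigma>) \<sigma>s)))"
    by (simp cong: conj_cong add: Lam_step_in_Delta_member_iff)
  finally show ?thesis .
qed

end
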